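(* Let $\mathbb X,\mathbb Y,\mathbb X^\sharp,\mathbb Y^\sharp$ be sets and let $c:\mathbb X\times\mathbb X^\sharp\to\overline{\mathbb R}$ and $d:\mathbb Y\times\mathbb Y^\sharp\to\overline{\mathbb R}$ be coupling functions. Let $K:\mathbb X\times\mathbb Y\to\overline{\mathbb R}$, $f:\mathbb X\to\overline{\mathbb R}$ and $g:\mathbb Y\to\overline{\mathbb R}$ be arbitrary functions. If $$f(x)\ \ge\ \inf_{y\in\mathbb Y}\big(K(x,y)\mathbin{\overset{\cdot}{+}} g(y)\big)\quad\text{for all }x\in\mathbb X,$$ then $$f^{c}(x^\sharp)\ \le\ \inf_{y^\sharp\in\mathbb Y^\sharp}\big(K^{c\mathbin{\underset{\cdot}{+}} d}(x^\sharp,y^\sharp)\mathbin{\overset{\cdot}{+}} g^{-d}(y^\sharp)\big)\quad\text{for all }x^\sharp\in\mathbb X^\sharp.$$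
   Context: $\overline{\mathbb R}=[-\infty,+\infty]$. The Moreau lower addition $\mathbin{\underset{\cdot}{+}}$ is the usual addition extended by $(+\infty)\mathbin{\underset{\cdot}{+}}(-\infty)=(-\infty)\mathbin{\underset{\cdot}{+}}(+\infty)=-\infty$; the Moreau upper addition $\mathbin{\overset{\cdot}{+}}$ is the usual addition extended by $(+\infty)\mathbin{\overset{\cdot}{+}}(-\infty)=(-\infty)\mathbin{\overset{\cdot}{+}}(+\infty)=+\infty$. For a coupling $c:\mathbb X\times\mathbb X^\sharp\to\overline{\mathbb R}$ and $f:\mathbb X\to\overline{\mathbb R}$, the Fenchel–Moreau conjugate is $f^{c}(x^\sharp)=\sup_{x\in\mathbb X}\big(c(x,x^\sharp)\mathbin{\underset{\cdot}{+}}(-f(x))\big)$. In particular $g^{-d}(y^\sharp)=\sup_{y\in\mathbb Y}\big((-d(y,y^\sharp))\mathbin{\underset{\cdot}{+}}(-g(y))\big)$. The sum coupling $c\mathbin{\underset{\cdot}{+}} d$ between $\mathbb X\times\mathbb Y$ and $\mathbb X^\sharp\times\mathbb Y^\sharp$ is $((x,y),(x^\sharp,y^\sharp))\mapsto c(x,x^\sharp)\mathbin{\underset{\cdot}{+}} d(y,y^\sharp)$, so that $K^{c\mathbin{\underset{\cdot}{+}} d}(x^\sharp,y^\sharp)=\sup_{x\in\mathbb X,y\in\mathbb Y}\big(c(x,x^\sharp)\mathbin{\underset{\cdot}{+}} d(y,y^\sharp)\mathbin{\underset{\cdot}{+}}(-K(x,y))\big)$. *)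

theory Defs
  imports "HOL-Library.Extended_Real"
begin

definition lplus :: "ereal \<Rightarrow> ereal \<Rightarrow> ereal" (infixl "+\<^sub>l" 65) where
  "a +\<^sub>l b = (if (a = \<infinity> \<and> b = -\<infinity>) \<or> (a = -\<infinity> \<and> b = \<infinity>) then -\<infinity> else a + b)"

definition uplus :: "ereal \<Rightarrow> ereal \<Rightarrow> ereal" (infixl "+\<^sub>u" 65) where
  "a +\<^sub>u b = (if (a = \<infinity> \<and> b = -\<infinity>) \<or> (a = -\<infinity> \<and> b = \<infinity>) then \<infinity> else a + b)"

definition fm_conj :: "('x \<Rightarrow> 'xs \<Rightarrow> ereal) \<Rightarrow> ('x \<Rightarrow> ereal) \<Rightarrow> 'xs \<Rightarrow> ereal" where
  "fm_conj c f xs = (SUP x. c x xs +\<^sub>l (- f x))"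

definition sum_coupling ::
  "('x \<Rightarrow> 'xs \<Rightarrow> ereal) \<Rightarrow> ('y \<Rightarrow> 'ys \<Rightarrow> ereal) \<Rightarrow> ('x \<times> 'y) \<Rightarrow> ('xs \<times> 'ys) \<Rightarrow> ereal" where
  "sum_coupling c d p q = c (fst p) (fst q) +\<^sub>l d (snd p) (snd q)"

end

theory Submission
  imports Defs
begin

text \<open>Conjugation is antitone, so \<open>f\<^sup>c\<close> is bounded by the conjugate of
  \<open>x \<mapsto> inf\<^sub>y K(x,y) +\<^sub>u g(y)\<close>, a supremum over \<open>x\<close> and \<open>y\<close>. In Moreau arithmetic
  \<open>a +\<^sub>l b \<le> (a +\<^sub>l e) +\<^sub>u (-e +\<^sub>l b)\<close> for every \<open>e\<close>; inserting \<open>e = d(y,y\<^sup>\<sharp>)\<close>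
  splits each term of that supremum into a term of the supremum defining
  \<open>K\<^bsup>c +\<^sub>l d\<^esup>(x\<^sup>\<sharp>,y\<^sup>\<sharp>)\<close> plus a term of the one defining \<open>g\<^bsup>-d\<^esup>(y\<^sup>\<sharp>)\<close>.\<close>

lemma lplus_commute: "a +\<^sub>l b = b +\<^sub>l (a::ereal)"
  unfolding lplus_def by (auto simp: add.commute)

lemma lplus_assoc: "(a +\<^sub>l b) +\<^sub>l c = a +\<^sub>l (b +\<^sub>l (c::ereal))"
  unfolding lplus_def by (cases a; cases b; cases c) auto

lemma lplus_mono: "a \<le> a' \<Longrightarrow> b \<le> b' \<Longrightarrow> a +\<^sub>l b \<le> a' +\<^sub>l (b'::ereal)"
  unfolding lplus_def by (cases a; cases a'; cases b; cases b') auto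

lemma uplus_mono: "a \<le> a' \<Longrightarrow> b \<le> b' \<Longrightarrow> a +\<^sub>u b \<le> a' +\<^sub>u (b'::ereal)"
  unfolding uplus_def by (cases a; cases a'; cases b; cases b') auto

lemma uminus_uplus: "- (a +\<^sub>u b) = (- a) +\<^sub>l (- b::ereal)"
  unfolding lplus_def uplus_def by (cases a; cases b) auto

lemma lplus_le_uplus_split: "a +\<^sub>l b \<le> (a +\<^sub>l c) +\<^sub>u (- c +\<^sub>l (b::ereal))"
  unfolding lplus_def uplus_def by (cases a; cases b; cases c) auto

lemma lplus_SUP: "a +\<^sub>l (SUP y\<in>A. s y) = (SUP y\<in>A. a +\<^sub>l s y :: ereal)"
proof (cases a)
  case (real r)
  show ?thesis
  proof (cases "A = {}")
    case False
    have "a + (SUP y\<in>A. s y) = (SUP y\<in>A. a + s y)"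
      using SUP_ereal_add_left[OF False, of a s] real by (simp add: add.commute)
    then show ?thesis using real by (simp add: lplus_def)
  qed (simp add: lplus_def bot_ereal_def real)
next
  case PInf
  show ?thesis
  proof (cases "\<forall>y\<in>A. s y = -\<infinity>")
    case True
    then have "(SUP y\<in>A. s y) = -\<infinity>" "(SUP y\<in>A. a +\<^sub>l s y) = -\<infinity>"
      using PInf by (simp_all add: lplus_def flip: bot_ereal_def)
    then show ?thesis using PInf by (simp add: lplus_def)
  next
    case False
    then obtain y where "y \<in> A" "s y \<noteq> -\<infinity>" by blast
    then have "(SUP y\<in>A. s y) \<noteq> -\<infinity>"
      using SUP_upper[of y A s] by auto
    moreover have "(SUP y\<in>A. a +\<^sub>l s y) = \<infinity>"
      using SUP_upper[of y A "\<lambda>y. a +\<^sub>l s y"] \<open>y \<in> A\<close> \<open>s y \<noteq> -\<infinity>\<close> PInf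
      by (simp add: lplus_def)
    ultimately show ?thesis using PInf by (simp add: lplus_def)
  qed
next
  case MInf
  have "-\<infinity> +\<^sub>l b = -\<infinity>" for b
    unfolding lplus_def by (cases b) auto
  then show ?thesis using MInf by (simp flip: bot_ereal_def)
qed

lemma fm_conj_upper: "c x xs +\<^sub>l - f x \<le> fm_conj c f xs"
  unfolding fm_conj_def by (rule SUP_upper) simp

lemma fm_conj_antimono:
  assumes "\<And>x. h x \<le> f x"
  shows "fm_conj c f xs \<le> fm_conj c h xs"
  unfolding fm_conj_def using assms by (intro SUP_mono' lplus_mono) auto

lemma fm_conj_INF:
  "fm_conj c (\<lambda>x. INF y\<in>A. h x y) xs = (SUP x. SUP y\<in>A. c x xs +\<^sub>l - h x y)"
  unfolding fm_conj_def by (simp add: ereal_SUP_uminus_eq[symmetric] lplus_SUP)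

lemma fenchel_young_sum_coupling:
  "c x xs +\<^sub>l - (K (x, y) +\<^sub>u g y)
     \<le> fm_conj (sum_coupling c d) K (xs, ys) +\<^sub>u fm_conj (\<lambda>y ys. - d y ys) g ys"
proof -
  have "c x xs +\<^sub>l - (K (x, y) +\<^sub>u g y) = (c x xs +\<^sub>l - K (x, y)) +\<^sub>l - g y"
    by (simp add: uminus_uplus lplus_assoc)
  also have "\<dots> \<le> ((c x xs +\<^sub>l - K (x, y)) +\<^sub>l d y ys) +\<^sub>u (- d y ys +\<^sub>l - g y)"
    by (rule lplus_le_uplus_split)
  also have "\<dots> = (sum_coupling c d (x, y) (xs, ys) +\<^sub>l - K (x, y)) +\<^sub>u (- d y ys +\<^sub>l - g y)"
    by (simp add: sum_coupling_def) (metis lplus_assoc lplus_commute)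
  also have "\<dots> \<le> fm_conj (sum_coupling c d) K (xs, ys) +\<^sub>u fm_conj (\<lambda>y ys. - d y ys) g ys"
    by (intro uplus_mono fm_conj_upper)
  finally show ?thesis .
qed

theorem theorem1:
  fixes c :: "'x \<Rightarrow> 'xs \<Rightarrow> ereal" and d :: "'y \<Rightarrow> 'ys \<Rightarrow> ereal"
    and K :: "'x \<times> 'y \<Rightarrow> ereal" and f :: "'x \<Rightarrow> ereal" and g :: "'y \<Rightarrow> ereal"
  assumes "\<forall>x. f x \<ge> (INF y. K (x, y) +\<^sub>u g y)"
  shows "\<forall>xs. fm_conj c f xs \<le>
           (INF ys. fm_conj (sum_coupling c d) K (xs, ys) +\<^sub>u fm_conj (\<lambda>y ys. - d y ys) g ys)"
proof (intro allI INF_greatest)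
  fix xs ys
  have "fm_conj c f xs \<le> fm_conj c (\<lambda>x. INF y. K (x, y) +\<^sub>u g y) xs"
    using assms by (intro fm_conj_antimono) simp
  also have "\<dots> = (SUP x. SUP y. c x xs +\<^sub>l - (K (x, y) +\<^sub>u g y))"
    by (rule fm_conj_INF)
  also have "\<dots> \<le> fm_conj (sum_coupling c d) K (xs, ys) +\<^sub>u fm_conj (\<lambda>y ys. - d y ys) g ys"
    by (intro SUP_least fenchel_young_sum_coupling)
  finally show "fm_conj c f xs
      \<le> fm_conj (sum_coupling c d) K (xs, ys) +\<^sub>u fm_conj (\<lambda>y ys. - d y ys) g ys" .
qed

end
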